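(* Let $\{x,y\}$ be Cartesian coordinates on $\mathbb{E}^2$, $z=\frac12(x-iy)$, $\bar z=\frac12(x+iy)$, and let $\xi=\xi_{\{\mu\}}$ be a GCKV with parameters $\mu=(\mu_0,\mu_1,\mu_2)\in\mathbb{C}^3$. Let $\gamma,\delta\in\mathbb{C}$ be any pair with $\frac12\delta^2\mu_2-\gamma\delta\mu_1+\gamma^2\mu_0=1$ and set $\alpha=\frac12(\delta\mu_2-\gamma\mu_1)$, $\beta=\frac12\delta\mu_1-\gamma\mu_0$. Then: (i) In the coordinate system $\{\omega,\bar\omega\}$ defined by $\omega=(\alpha z+\beta)/(\gamma z+\delta)$, $\xi$ takes the canonical form $\xi=(\mu_0'+\omega^2)\partial_\omega+(\bar\mu_0'+\bar\omega^2)\partial_{\bar\omega}$, where $4\mu_0':=2\mu_0\mu_2-\mu_1^2$. (ii) Any other coordinate system $\{\omega',\bar\omega'\}$ (obtained from $\omega$ by a Möbius coordinate change) in which $\xi$ is in canonical form is related to $\{\omega,\bar\omega\}$ by $\omega'=(\delta'\omega-\gamma'\mu_0')/(\gamma'\omega+\delta')$ with $\delta'^2+\mu_0'\gamma'^2=1$. (iii) Write $4\mu_0'=Qe^{-2i\theta}$ with $Q\ge0$, $\theta\in[0,\pi)$ ($\theta$ arbitrary if $Q=0$). Define the complex coordinate $\zeta:=\frac12(v_1+iv_2)$ by $$\omega=\frac{i\sqrt Q\,e^{-i\theta}}{2}\,\frac{1+e^{2i\sqrt Q e^{-i\theta}\zeta}}{1-e^{2i\sqrt Q e^{-i\theta}\zeta}}\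 \ (Q>0),\qquad \omega=-\frac{1}{2\zeta}\ \ (Q=0).$$ Then the (locally defined) real coordinates $\{v_1,v_2\}$ are adapted to $\xi$ and to $\xi^\perp:=\xi_{\{i\mu\}}$, namely $\xi=\partial_{v_1}$ and $\xi^\perp=\partial_{v_2}$. (iv) For $u=(u_0,u_1,u_2,u_3)\in\mathbb{R}^4\setminus\{0\}$, the metric $g_u:=\Omega_u^{-2}(dx^2+dy^2)$, $\Omega_u:=u_0(1+z\bar z)+u_1(1-z\bar z)+u_2(z+\bar z)+u_3\,i(z-\bar z)$, takes in the coordinates $\{v_1,v_2\}$ the form $$g_u=\frac{dv_1^2+dv_2^2}{\big((u_0'-u_1')f_++(u_0'+u_1')f_-+u_2'f_2+u_3'f_3\big)^2},$$ where $u'=(u_0',u_1',u_2',u_3')^T:=\Lambda\,(u_0,u_1,u_2,u_3)^T$ and $\Lambda$, $f_\pm,f_2,f_3$ are as in the context.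
   Context: A GCKV with parameters $\mu\in\mathbb{C}^3$ is $\xi_{\{\mu\}}=(\mu_0+\mu_1z+\frac12\mu_2z^2)\partial_z+(\bar\mu_0+\bar\mu_1\bar z+\frac12\bar\mu_2\bar z^2)\partial_{\bar z}$ (the conformal Killing vectors of $dx^2+dy^2$ that extend smoothly to the Riemann sphere); in a complex coordinate $w$, $\xi$ is in canonical form if it reads $(c+w^2)\partial_w+(\bar c+\bar w^2)\partial_{\bar w}$ for some $c\in\mathbb{C}$. Functions: $h_1:=v_1\cos\theta+v_2\sin\theta$, $h_2:=v_2\cos\theta-v_1\sin\theta$; for $Q>0$: $f_+=\frac14(\cosh(\sqrt Q h_2)+\cos(\sqrt Q h_1))$, $f_-=\frac1Q(\cosh(\sqrt Q h_2)-\cos(\sqrt Q h_1))$, $f_2=\frac1{\sqrt Q}(\sin\theta\sinh(\sqrt Q h_2)-\cos\theta\sin(\sqrt Q h_1))$, $f_3=-\frac1{\sqrt Q}(\cos\theta\sinh(\sqrt Q h_2)+\sin\theta\sin(\sqrt Q h_1))$; for $Q=0$: $f_+=\frac12$, $f_-=\frac12(v_1^2+v_2^2)$, $f_2=-v_1$, $f_3=-v_2$. $\Lambda=\frac12 N$ with the rows of $N$: row 0: $\big(\alpha\bar\alpha+\beta\bar\beta+\gamma\bar\gamma+\delta\bar\delta,\ \alpha\bar\alpha-\beta\bar\beta+\gamma\bar\gamma-\delta\bar\delta,\ -\alpha\bar\beta-\beta\bar\alpha-\gamma\bar\delta-\delta\bar\gamma,\ i(\alpha\bar\beta-\beta\bar\alpha+\gamma\bar\delta-\delta\bar\gamma)\big)$;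 row 1: $\big(\alpha\bar\alpha+\beta\bar\beta-\gamma\bar\gamma-\delta\bar\delta,\ \alpha\bar\alpha-\beta\bar\beta-\gamma\bar\gamma+\delta\bar\delta,\ -\alpha\bar\beta-\beta\bar\alpha+\gamma\bar\delta+\delta\bar\gamma,\ i(\alpha\bar\beta-\beta\bar\alpha-\gamma\bar\delta+\delta\bar\gamma)\big)$; row 2: $\big(-(\alpha\bar\gamma+\beta\bar\delta+\gamma\bar\alpha+\delta\bar\beta),\ -\alpha\bar\gamma+\beta\bar\delta-\gamma\bar\alpha+\delta\bar\beta,\ \alpha\bar\delta+\beta\bar\gamma+\gamma\bar\beta+\delta\bar\alpha,\ i(-\alpha\bar\delta+\beta\bar\gamma-\gamma\bar\beta+\delta\bar\alpha)\big)$; row 3: $\big(i(-\alpha\bar\gamma-\beta\bar\delta+\gamma\bar\alpha+\delta\bar\beta),\ i(-\alpha\bar\gamma+\beta\bar\delta+\gamma\bar\alpha-\delta\bar\beta),\ i(\alpha\bar\delta+\beta\bar\gamma-\gamma\bar\beta-\delta\bar\alpha),\ \alpha\bar\delta-\beta\bar\gamma-\gamma\bar\beta+\delta\bar\alpha\big)$. *)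

theory Defs
  imports "HOL-Analysis.Analysis"
begin

text \<open>The holomorphic (\<partial>_z) component of the GCKV with parameters (mu0,mu1,mu2)
  in the complex coordinate z; the \<partial>_zbar component is its complex conjugate.\<close>
definition gckv :: "complex \<Rightarrow> complex \<Rightarrow> complex \<Rightarrow> complex \<Rightarrow> complex" where
  "gckv m0 m1 m2 z = m0 + m1 * z + m2 * z^2 / 2"

definition mob :: "complex \<Rightarrow> complex \<Rightarrow> complex \<Rightarrow> complex \<Rightarrow> complex \<Rightarrow> complex" where
  "mob a b c d w = (a * w + b) / (c * w + d)"

text \<open>A vector field with holomorphic component V (in the old coordinate) reads
  W(w') \<partial>_w' + conj in the new holomorphic coordinate w' = phi(old) on S:
  its new component is V times phi', expressed as a function of the new coordinate.\<close>
definition reads_as :: "(complex \<Rightarrow> complex) \<Rightarrow> (complex \<Rightarrow> complex) \<Rightarrow> (complex \<Rightarrow> complex)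
    \<Rightarrow> complex set \<Rightarrow> bool" where
  "reads_as V phi W S \<longleftrightarrow>
     (\<forall>z\<in>S. \<exists>d. (phi has_field_derivative d) (at z) \<and> V z * d = W (phi z))"

definition canonical_in :: "(complex \<Rightarrow> complex) \<Rightarrow> (complex \<Rightarrow> complex) \<Rightarrow> complex set
    \<Rightarrow> complex \<Rightarrow> bool" where
  "canonical_in V phi S c \<longleftrightarrow> reads_as V phi (\<lambda>w. c + w^2) S"

definition omega_of_zeta :: "real \<Rightarrow> real \<Rightarrow> complex \<Rightarrow> complex" where
  "omega_of_zeta Q th zeta =
     (if Q > 0 then
        (\<i> * of_real (sqrt Q) * exp (- \<i> * of_real th) / 2) *
        (1 + exp (2 * \<i> * of_real (sqrt Q) * exp (- \<i> * of_real th) * zeta)) /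
        (1 - exp (2 * \<i> * of_real (sqrt Q) * exp (- \<i> * of_real th) * zeta))
      else - 1 / (2 * zeta))"

definition zeta_ok :: "real \<Rightarrow> real \<Rightarrow> complex \<Rightarrow> bool" where
  "zeta_ok Q th zeta =
     (if Q > 0 then 1 - exp (2 * \<i> * of_real (sqrt Q) * exp (- \<i> * of_real th) * zeta) \<noteq> 0
      else zeta \<noteq> 0)"

definition Omega :: "real \<Rightarrow> real \<Rightarrow> real \<Rightarrow> real \<Rightarrow> complex \<Rightarrow> complex" where
  "Omega u0 u1 u2 u3 z = of_real u0 * (1 + z * cnj z) + of_real u1 * (1 - z * cnj z)
     + of_real u2 * (z + cnj z) + of_real u3 * \<i> * (z - cnj z)"

text \<open>The point (x,y) as x + i y, given z = (x - i y)/2.\<close>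
definition xy_of_z :: "complex \<Rightarrow> complex" where
  "xy_of_z z = 2 * cnj z"

definition h1 :: "real \<Rightarrow> real \<Rightarrow> real \<Rightarrow> real" where
  "h1 th v1 v2 = v1 * cos th + v2 * sin th"
definition h2 :: "real \<Rightarrow> real \<Rightarrow> real \<Rightarrow> real" where
  "h2 th v1 v2 = v2 * cos th - v1 * sin th"

definition fplus :: "real \<Rightarrow> real \<Rightarrow> real \<Rightarrow> real \<Rightarrow> real" where
  "fplus Q th v1 v2 = (if Q > 0 then
     (cosh (sqrt Q * h2 th v1 v2) + cos (sqrt Q * h1 th v1 v2)) / 4 else 1/2)"
definition fminus :: "real \<Rightarrow> real \<Rightarrow> real \<Rightarrow> real \<Rightarrow> real" where
  "fminus Q th v1 v2 = (if Q > 0 then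
     (cosh (sqrt Q * h2 th v1 v2) - cos (sqrt Q * h1 th v1 v2)) / Q else (v1^2 + v2^2) / 2)"
definition f2 :: "real \<Rightarrow> real \<Rightarrow> real \<Rightarrow> real \<Rightarrow> real" where
  "f2 Q th v1 v2 = (if Q > 0 then
     (sin th * sinh (sqrt Q * h2 th v1 v2) - cos th * sin (sqrt Q * h1 th v1 v2)) / sqrt Q
     else - v1)"
definition f3 :: "real \<Rightarrow> real \<Rightarrow> real \<Rightarrow> real \<Rightarrow> real" where
  "f3 Q th v1 v2 = (if Q > 0 then
     - (cos th * sinh (sqrt Q * h2 th v1 v2) + sin th * sin (sqrt Q * h1 th v1 v2)) / sqrt Q
     else - v2)"

definition Nmat :: "complex \<Rightarrow> complex \<Rightarrow> complex \<Rightarrow> complex \<Rightarrow> nat \<Rightarrow> nat \<Rightarrow> complex" where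
  "Nmat a b g d i j =
    (let A = a; B = b; G = g; D = d; cA = cnj a; cB = cnj b; cG = cnj g; cD = cnj d in
     [[A*cA + B*cB + G*cG + D*cD, A*cA - B*cB + G*cG - D*cD,
       - A*cB - B*cA - G*cD - D*cG, \<i> * (A*cB - B*cA + G*cD - D*cG)],
      [A*cA + B*cB - G*cG - D*cD, A*cA - B*cB - G*cG + D*cD,
       - A*cB - B*cA + G*cD + D*cG, \<i> * (A*cB - B*cA - G*cD + D*cG)],
      [- (A*cG + B*cD + G*cA + D*cB), - A*cG + B*cD - G*cA + D*cB,
       A*cD + B*cG + G*cB + D*cA, \<i> * (- A*cD + B*cG - G*cB + D*cA)],
      [\<i> * (- A*cG - B*cD + G*cA + D*cB), \<i> * (- A*cG + B*cD + G*cA - D*cB),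
       \<i> * (A*cD + B*cG - G*cB - D*cA), A*cD - B*cG - G*cB + D*cA]] ! i ! j)"

definition Lam :: "complex \<Rightarrow> complex \<Rightarrow> complex \<Rightarrow> complex \<Rightarrow> nat \<Rightarrow> nat \<Rightarrow> complex" where
  "Lam a b g d i j = Nmat a b g d i j / 2"

end

theory Submission
  imports Defs
begin

(*
  (i) With alpha, beta as given, (alpha delta - beta gamma) V(z) = mu0' (gamma z + delta)^2
  + (alpha z + beta)^2 identically, and alpha delta - beta gamma is the normalisation, i.e. 1.
  Dividing by (gamma z + delta)^2, the derivative of the Moebius map, gives the canonical form.
  (ii) Conversely, a Moebius map preserving the canonical form yields an identity between
  quadratic polynomials at every non-pole, so their coefficients agree; this forces a = d,
  b = - mu0' c, and rescaling by a square root of the determinant normalises d^2 + mu0' c^2.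
  (iii) omega(zeta) solves the Riccati equation d omega / d zeta = 2 (mu0' + omega^2)
  (a hyperbolic cotangent for Q > 0, -1/(2 zeta) for Q = 0), while by (i) the inverse Moebius
  map satisfies V(z(omega)) = (mu0' + omega^2) z'(omega); as d zeta / d v1 = 1/2 and
  d zeta / d v2 = i/2, the chain rule gives dz/dv1 = V(z) and dz/dv2 = i V(z).
  (iv) Hence dx^2 + dy^2 = 4 |V|^2 (dv1^2 + dv2^2). The matrix Lambda is exactly the change of
  the Hermitian form Omega_u(z) |alpha - gamma omega|^2 to the omega coordinate, and
  2 |mu0' + omega^2| f_-, f_+, f_2, f_3 are 1, |omega|^2, omega + cnj omega, i (omega - cnj omega);
  so Omega_u = 2 |V| D, which is the claimed form of g_u.
*)

lemma mob_has_field_derivative: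
  fixes a b c d z :: complex
  assumes "c * z + d \<noteq> 0"
  shows "(mob a b c d has_field_derivative (a * d - b * c) / (c * z + d)^2) (at z)"
  unfolding mob_def using assms
  by (auto intro!: derivative_eq_intros simp: field_simps power2_eq_square)

lemma mob_inverse_denominator:
  fixes a b c d w :: complex
  assumes "a - c * w \<noteq> 0"
  shows "c * mob d (- b) (- c) a w + d = (a * d - b * c) / (a - c * w)"
  using assms unfolding mob_def by (simp add: field_simps)

lemma mob_inverse_numerator:
  fixes a b c d w :: complex
  assumes "a - c * w \<noteq> 0"
  shows "a * mob d (- b) (- c) a w + b = (a * d - b * c) * w / (a - c * w)"
  using assms unfolding mob_def by (simp add: field_simps)

lemma mob_scale:
  fixes a b c d s :: complex
  assumes "s \<noteq> 0"
  shows "mob (a / s) (b / s) (c / s) (d / s) = mob a b c d"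
proof
  fix w
  have "a / s * w + b / s = (a * w + b) / s" "c / s * w + d / s = (c * w + d) / s"
    by (simp_all add: add_divide_distrib)
  then show "mob (a / s) (b / s) (c / s) (d / s) w = mob a b c d w"
    using assms unfolding mob_def by simp
qed

lemma quadratic_eq_0_at_three_points:
  fixes A B C x y z :: "'a :: idom"
  assumes "distinct [x, y, z]"
    and "A * x^2 + B * x + C = 0" "A * y^2 + B * y + C = 0" "A * z^2 + B * z + C = 0"
  shows "A = 0 \<and> B = 0 \<and> C = 0"
proof -
  have "(x - y) * (A * (x + y) + B) = (A * x^2 + B * x + C) - (A * y^2 + B * y + C)"
    and "(x - z) * (A * (x + z) + B) = (A * x^2 + B * x + C) - (A * z^2 + B * z + C)"
    by (simp_all add: power2_eq_square algebra_simps)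
  then have "(x - y) * (A * (x + y) + B) = 0" "(x - z) * (A * (x + z) + B) = 0"
    using assms(2-4) by simp_all
  then have xy: "A * (x + y) + B = 0" and xz: "A * (x + z) + B = 0"
    using assms(1) by auto
  have "A * (y - z) = (A * (x + y) + B) - (A * (x + z) + B)" by (simp add: algebra_simps)
  then have "A * (y - z) = 0" using xy xz by simp
  then have "A = 0" using assms(1) by simp
  then show ?thesis using xy assms(2) by simp
qed

lemma canonical_in_mob_identity:
  fixes a b c d m c' w :: complex
  assumes "canonical_in (\<lambda>w. m + w^2) (mob a b c d) {w. c * w + d \<noteq> 0} c'"
    and w: "c * w + d \<noteq> 0"
  shows "(a * d - b * c) * (m + w^2) = c' * (c * w + d)^2 + (a * w + b)^2"
proof -
  from assms obtain k where k: "(mob a b c d has_field_derivative k) (at w)"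
      and eq: "(m + w^2) * k = c' + (mob a b c d w)^2"
    unfolding canonical_in_def reads_as_def by auto
  have "k = (a * d - b * c) / (c * w + d)^2"
    using DERIV_unique[OF k mob_has_field_derivative[OF w]] .
  with eq have "(m + w^2) * (a * d - b * c) / (c * w + d)^2 = c' + (a * w + b)^2 / (c * w + d)^2"
    by (simp add: mob_def power_divide)
  with w show ?thesis by (simp add: field_simps)
qed

lemma canonical_in_mob_coefficients:
  fixes a b c d m c' :: complex
  assumes det: "a * d - b * c \<noteq> 0"
    and can: "canonical_in (\<lambda>w. m + w^2) (mob a b c d) {w. c * w + d \<noteq> 0} c'"
  shows "a * d - b * c = c' * c^2 + a^2" "c' * c * d + a * b = 0" "(a * d - b * c) * m = c' * d^2 + b^2"
proof -
  define A B C where "A = a * d - b * c - (c' * c^2 + a^2)" and "B = c' * c * d + a * b"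
    and "C = (a * d - b * c) * m - (c' * d^2 + b^2)"
  have root: "A * w^2 + (- 2 * B) * w + C = 0" if "c * w + d \<noteq> 0" for w
  proof -
    have "A * w^2 + (- 2 * B) * w + C
        = (a * d - b * c) * (m + w^2) - (c' * (c * w + d)^2 + (a * w + b)^2)"
      unfolding A_def B_def C_def by (simp add: power2_eq_square algebra_simps)
    then show ?thesis using canonical_in_mob_identity[OF can that] by simp
  qed
  define w0 where "w0 = (if c = 0 then 0 else - d / c)"
  have "c * (w0 + t) + d \<noteq> 0" if "t \<noteq> 0" for t
    using det that by (cases "c = 0") (auto simp: w0_def field_simps)
  then have "A = 0 \<and> - 2 * B = 0 \<and> C = 0"
    by (intro quadratic_eq_0_at_three_points[of "w0 + 1" "w0 + 2" "w0 + 3"] root) auto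
  then have "A = 0" "B = 0" "C = 0" by simp_all
  then show "a * d - b * c = c' * c^2 + a^2" "c' * c * d + a * b = 0"
    "(a * d - b * c) * m = c' * d^2 + b^2"
    by (simp_all only: A_def B_def C_def right_minus_eq)
qed

lemma canonical_in_mob_normal_form:
  fixes a b c d m c' :: complex
  assumes det: "a * d - b * c \<noteq> 0"
    and can: "canonical_in (\<lambda>w. m + w^2) (mob a b c d) {w. c * w + d \<noteq> 0} c'"
  shows "a = d" "b = - c' * c" "c' = m"
proof -
  define D where "D = a * d - b * c"
  note coeff = canonical_in_mob_coefficients[OF det can, folded D_def]
  have "D * (d - a) = c * (c' * c * d + a * b)"
    using coeff(1) unfolding D_def by (simp add: power2_eq_square algebra_simps)
  then show ad: "a = d" using coeff(2) det D_def by simp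
  show bc: "b = - c' * c"
  proof (cases "c = 0")
    case True
    then show ?thesis using coeff(2) det ad by simp
  next
    case False
    have "c * (b + c' * c) = 0" using coeff(1) ad D_def by (simp add: power2_eq_square algebra_simps)
    then show ?thesis using False by (simp add: eq_neg_iff_add_eq_0)
  qed
  have "D * m = c' * D"
    using coeff(1,3) ad bc by (simp add: power2_eq_square algebra_simps)
  then show "c' = m" using det D_def by simp
qed

lemma canonical_in_mob_unique:
  fixes a b c d m c' :: complex
  assumes det: "a * d - b * c \<noteq> 0"
    and can: "canonical_in (\<lambda>w. m + w^2) (mob a b c d) {w. c * w + d \<noteq> 0} c'"
  shows "\<exists>gam' del'. del'^2 + m * gam'^2 = 1 \<and>
           (\<forall>w. c * w + d \<noteq> 0 \<longrightarrow> gam' * w + del' \<noteq> 0 \<and>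
                mob a b c d w = mob del' (- gam' * m) gam' del' w)"
proof -
  note nf = canonical_in_mob_normal_form[OF det can]
  define s where "s = csqrt (a * d - b * c)"
  have "s^2 = a * d - b * c" unfolding s_def by simp
  then have s2: "s^2 = d^2 + m * c^2" using nf by (simp add: power2_eq_square)
  have s0: "s \<noteq> 0" using det unfolding s_def by simp
  show ?thesis
  proof (intro exI conjI allI impI)
    have "d^2 + m * c^2 \<noteq> 0" using s2 s0 by (metis power_not_zero)
    then show "(d / s)^2 + m * (c / s)^2 = 1"
      using s2 by (simp add: power_divide add_divide_distrib[symmetric])
    fix w assume w: "c * w + d \<noteq> 0"
    show "c / s * w + d / s \<noteq> 0" using w s0 by (simp add: field_simps)
    have "mob (d / s) (- (c / s) * m) (c / s) (d / s) = mob d (- c * m) c d"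
      using mob_scale[OF s0, of d "- c * m" c d] by simp
    then show "mob a b c d w = mob (d / s) (- (c / s) * m) (c / s) (d / s) w"
      using nf by (simp add: mult.commute)
  qed
qed

lemma riccati_coth_has_field_derivative:
  fixes K y :: complex
  defines "w \<equiv> \<lambda>y. K * (1 + exp (4 * K * y)) / (1 - exp (4 * K * y))"
  assumes "exp (4 * K * y) \<noteq> 1"
  shows "(w has_field_derivative 2 * (w y ^ 2 - K^2)) (at y)"
proof -
  define E where "E = exp (4 * K * y)"
  have E1: "1 - E \<noteq> 0" using assms(2) unfolding E_def by simp
  have "(w has_field_derivative (K * (4 * K * E) * (1 - E) + K * (1 + E) * (4 * K * E)) / (1 - E)^2) (at y)"
    using E1 unfolding w_def E_def by (auto intro!: derivative_eq_intros simp: power2_eq_square)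
  moreover have "(w y ^ 2 - K^2) * (1 - E)^2 = 4 * K^2 * E"
  proof -
    have "w y ^ 2 * (1 - E)^2 = (K * (1 + E))^2"
      using E1 unfolding w_def E_def[symmetric] by (simp add: power_divide)
    then show ?thesis by (simp add: power2_eq_square algebra_simps)
  qed
  then have "w y ^ 2 - K^2 = 4 * K^2 * E / (1 - E)^2"
    using E1 by (simp add: eq_divide_eq)
  then have "(K * (4 * K * E) * (1 - E) + K * (1 + E) * (4 * K * E)) / (1 - E)^2 = 2 * (w y ^ 2 - K^2)"
    by (simp add: power2_eq_square algebra_simps)
  ultimately show ?thesis by simp
qed

lemma coth_real_forms:
  fixes K :: complex and r b :: real
  assumes r0: "r > 0"
  defines "E \<equiv> of_real r * cis b"
  defines "w \<equiv> K * (1 + E) / (1 - E)"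
      and "X \<equiv> 1 - 2 * r * cos b + r^2"
  assumes E1: "E \<noteq> 1"
  shows "X \<noteq> 0"
    and "cmod (w^2 - K^2) = 4 * (cmod K)^2 * r / X"
    and "w * cnj w = of_real ((cmod K)^2 * (1 + 2 * r * cos b + r^2) / X)"
    and "w + cnj w = of_real (2 * (Re K * (1 - r^2) - Im K * (2 * r * sin b)) / X)"
    and "\<i> * (w - cnj w) = of_real (- 2 * (Im K * (1 - r^2) + Re K * (2 * r * sin b)) / X)"
proof -
  have nE: "cmod E = r" unfolding E_def using r0 by (simp add: norm_mult)
  have EE: "E * cnj E = of_real (r^2)" by (metis complex_norm_square nE)
  have KK: "K * cnj K = of_real ((cmod K)^2)" by (rule complex_norm_square[symmetric])
  have EpE: "E + cnj E = of_real (2 * r * cos b)" and EmE: "E - cnj E = \<i> * of_real (2 * r * sin b)"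
    unfolding E_def by (simp_all add: complex_eq_iff)
  have KpK: "K + cnj K = of_real (2 * Re K)" and KmK: "K - cnj K = \<i> * of_real (2 * Im K)"
    by (simp_all add: complex_eq_iff)
  have "(1 - E) * (1 - cnj E) = 1 - (E + cnj E) + E * cnj E" by (simp add: algebra_simps)
  then have hX: "(1 - E) * (1 - cnj E) = of_real X" unfolding EpE EE X_def by simp
  have "(1 + E) * (1 + cnj E) = 1 + (E + cnj E) + E * cnj E" by (simp add: algebra_simps)
  then have hP: "(1 + E) * (1 + cnj E) = of_real (1 + 2 * r * cos b + r^2)" unfolding EpE EE by simp
  have ok: "1 - E \<noteq> 0" and ok': "1 - cnj E \<noteq> 0" using E1 by (auto simp: complex_eq_iff)
  show "X \<noteq> 0" using hX ok ok' by (metis mult_eq_0_iff of_real_eq_0_iff)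
  have "w^2 * (1 - E)^2 = (K * (1 + E))^2"
    using ok unfolding w_def by (simp add: power_divide)
  then have "(w^2 - K^2) * (1 - E)^2 = K^2 * (4 * E)" by (simp add: power2_eq_square algebra_simps)
  then have "w^2 - K^2 = K^2 * (4 * E) / (1 - E)^2" using ok by (simp add: eq_divide_eq)
  moreover have "(cmod (1 - E))^2 = X"
    using hX complex_norm_square[of "1 - E"] by (metis complex_cnj_diff complex_cnj_one of_real_eq_iff)
  ultimately show "cmod (w^2 - K^2) = 4 * (cmod K)^2 * r / X"
    by (simp add: norm_divide norm_mult norm_power nE)
  have "w * cnj w = (K * cnj K) * ((1 + E) * (1 + cnj E)) / ((1 - E) * (1 - cnj E))"
    unfolding w_def by (simp add: field_simps)
  then show "w * cnj w = of_real ((cmod K)^2 * (1 + 2 * r * cos b + r^2) / X)"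
    unfolding KK hP hX by simp
  have "w + cnj w = ((K + cnj K) * (1 - E * cnj E) + (K - cnj K) * (E - cnj E)) / ((1 - E) * (1 - cnj E))"
    unfolding w_def using ok ok' by (simp add: field_simps)
  then show "w + cnj w = of_real (2 * (Re K * (1 - r^2) - Im K * (2 * r * sin b)) / X)"
    unfolding KpK KmK EE EmE hX by (simp add: algebra_simps)
  have "\<i> * (w - cnj w)
      = \<i> * ((K - cnj K) * (1 - E * cnj E) + (K + cnj K) * (E - cnj E)) / ((1 - E) * (1 - cnj E))"
    unfolding w_def using ok ok' by (simp add: field_simps)
  then show "\<i> * (w - cnj w) = of_real (- 2 * (Im K * (1 - r^2) + Re K * (2 * r * sin b)) / X)"
    unfolding KpK KmK EE EmE hX by (simp add: algebra_simps)
qed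

lemma coth_coordinate_identities:
  fixes s a b th :: real
  assumes s0: "s > 0"
  defines "E \<equiv> exp (- of_real a + \<i> * of_real b)"
      and "K \<equiv> \<i> * of_real s * exp (- \<i> * of_real th) / 2"
  defines "w \<equiv> K * (1 + E) / (1 - E)"
  defines "M \<equiv> w^2 - K^2"
  assumes E1: "E \<noteq> 1"
  shows "of_real (2 * cmod M * ((cosh a - cos b) / s^2)) = (1::complex)"
    and "of_real (2 * cmod M * ((cosh a + cos b) / 4)) = w * cnj w"
    and "of_real (2 * cmod M * ((sin th * sinh a - cos th * sin b) / s)) = w + cnj w"
    and "of_real (2 * cmod M * (- (cos th * sinh a + sin th * sin b) / s)) = \<i> * (w - cnj w)"
proof -
  define r where "r = exp (- a)"
  define X where "X = 1 - 2 * r * cos b + r^2"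
  have r0: "r > 0" unfolding r_def by simp
  have E: "E = of_real r * cis b"
    unfolding E_def r_def by (simp add: complex_eq_iff Re_exp Im_exp)
  have "of_real r * cis b \<noteq> 1" using E1 unfolding E .
  note forms = coth_real_forms[OF r0 this, folded E X_def]
  note forms = forms(1) forms(2-5)[of K, folded w_def M_def]
  have K: "Re K = s * sin th / 2" "Im K = s * cos th / 2" "cmod K = s / 2"
    unfolding K_def using s0 by (simp_all add: Re_exp Im_exp norm_mult)
  have ch: "2 * r * cosh a = 1 + r^2" and sh: "2 * r * sinh a = 1 - r^2"
    unfolding r_def cosh_def sinh_def by (simp_all add: power2_eq_square exp_minus field_simps)
  have "2 * cmod M * ((cosh a - cos b) / s^2) = (2 * r * cosh a - 2 * r * cos b) / X"
    unfolding forms(2) K using s0 forms(1) by (simp add: field_simps)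
  also have "\<dots> = 1" unfolding ch using forms(1) by (simp add: X_def)
  finally show "of_real (2 * cmod M * ((cosh a - cos b) / s^2)) = (1::complex)" by (simp only: of_real_1)
  have h: "1 + 2 * r * cos b + r^2 = 2 * r * cosh a + 2 * r * cos b" using ch by simp
  show "of_real (2 * cmod M * ((cosh a + cos b) / 4)) = w * cnj w"
    unfolding forms(2,3) K h using forms(1) by (simp add: field_simps)
  show "of_real (2 * cmod M * ((sin th * sinh a - cos th * sin b) / s)) = w + cnj w"
    unfolding forms(2,4) K sh[symmetric] using forms(1) s0 by (simp add: field_simps power2_eq_square)
  show "of_real (2 * cmod M * (- (cos th * sinh a + sin th * sin b) / s)) = \<i> * (w - cnj w)"
    unfolding forms(2,5) K sh[symmetric] using forms(1) s0 by (simp add: field_simps power2_eq_square)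
qed

lemma inversion_coordinate_identities:
  fixes v1 v2 :: real
  defines "z \<equiv> (of_real v1 + \<i> * of_real v2) / 2"
  defines "w \<equiv> - 1 / (2 * z)"
  assumes z0: "z \<noteq> 0"
  shows "of_real (2 * cmod (w^2) * ((v1^2 + v2^2) / 2)) = (1::complex)"
    and "of_real (2 * cmod (w^2) * (1 / 2)) = w * cnj w"
    and "of_real (2 * cmod (w^2) * (- v1)) = w + cnj w"
    and "of_real (2 * cmod (w^2) * (- v2)) = \<i> * (w - cnj w)"
proof -
  define r where "r = v1^2 + v2^2"
  have zz: "z * cnj z = of_real (r / 4)" unfolding z_def r_def
    by (simp add: complex_eq_iff power2_eq_square)
  have r0: "r \<noteq> 0" using zz z0 by (metis complex_cnj_zero_iff divide_eq_0_iff mult_eq_0_iff of_real_0)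
  have cz0: "cnj z \<noteq> 0" using z0 by simp
  have "(cmod z)^2 = r / 4"
    using zz complex_norm_square[of z] by (metis of_real_eq_iff)
  then have nM: "cmod (w^2) = 1 / r" unfolding w_def
    by (simp add: norm_divide norm_mult norm_power power_divide)
  have zp: "z + cnj z = of_real v1" unfolding z_def by (simp add: complex_eq_iff)
  have zm: "z - cnj z = \<i> * of_real v2" unfolding z_def by (simp add: complex_eq_iff)
  have ww: "w * cnj w = 1 / (4 * (z * cnj z))" unfolding w_def by (simp add: field_simps)
  have wp: "w + cnj w = - (z + cnj z) / (2 * (z * cnj z))" unfolding w_def using z0 cz0
    by (simp add: field_simps)
  have wm: "w - cnj w = (z - cnj z) / (2 * (z * cnj z))" unfolding w_def using z0 cz0
    by (simp add: field_simps)
  show "of_real (2 * cmod (w^2) * ((v1^2 + v2^2) / 2)) = (1::complex)"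
    unfolding nM r_def[symmetric] using r0 by simp
  show "of_real (2 * cmod (w^2) * (1 / 2)) = w * cnj w"
    unfolding nM ww zz using r0 by simp
  show "of_real (2 * cmod (w^2) * (- v1)) = w + cnj w"
    unfolding nM wp zz zp using r0 by (simp add: field_simps)
  show "of_real (2 * cmod (w^2) * (- v2)) = \<i> * (w - cnj w)"
    unfolding nM wm zz zm using r0 by (simp add: field_simps)
qed

lemma omega_of_zeta_coth:
  fixes Q th :: real and y :: complex
  assumes Q: "Q > 0"
  defines "K \<equiv> \<i> * of_real (sqrt Q) * exp (- \<i> * of_real th) / 2"
  shows "omega_of_zeta Q th y = K * (1 + exp (4 * K * y)) / (1 - exp (4 * K * y))"
    and "zeta_ok Q th y \<longleftrightarrow> exp (4 * K * y) \<noteq> 1"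
    and "of_real Q * exp (- 2 * \<i> * of_real th) = - 4 * K^2"
proof -
  have "2 * \<i> * of_real (sqrt Q) * exp (- \<i> * of_real th) = 4 * K" unfolding K_def by simp
  then show "omega_of_zeta Q th y = K * (1 + exp (4 * K * y)) / (1 - exp (4 * K * y))"
    and "zeta_ok Q th y \<longleftrightarrow> exp (4 * K * y) \<noteq> 1"
    using Q unfolding omega_of_zeta_def zeta_ok_def K_def by (simp_all add: mult.assoc)
  have "exp (- 2 * \<i> * of_real th) = exp (- \<i> * of_real th) ^ 2"
    by (simp add: exp_of_nat_mult[symmetric] mult.assoc)
  moreover have "(of_real (sqrt Q))^2 = (of_real Q :: complex)"
    using Q by (simp flip: of_real_power)
  ultimately show "of_real Q * exp (- 2 * \<i> * of_real th) = - 4 * K^2"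
    unfolding K_def by (simp add: power_mult_distrib power_divide)
qed

lemma omega_of_zeta_has_field_derivative:
  fixes Q th :: real and m y :: complex
  assumes Q: "Q \<ge> 0" and m: "4 * m = of_real Q * exp (- 2 * \<i> * of_real th)"
    and ok: "zeta_ok Q th y"
  shows "(omega_of_zeta Q th has_field_derivative 2 * (m + (omega_of_zeta Q th y)^2)) (at y)"
proof (cases "Q > 0")
  case True
  define K where "K = \<i> * of_real (sqrt Q) * exp (- \<i> * of_real th) / 2"
  note coth = omega_of_zeta_coth[OF True, of th, folded K_def]
  have "omega_of_zeta Q th = (\<lambda>y. K * (1 + exp (4 * K * y)) / (1 - exp (4 * K * y)))"
    using coth(1) by blast
  moreover have "m = - (K^2)" using m coth(3) by simp
  ultimately show ?thesis
    using riccati_coth_has_field_derivative[of K y] ok coth(2) by simp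
next
  case False
  then have "Q = 0" using Q by simp
  then have om: "omega_of_zeta Q th = (\<lambda>y. - 1 / (2 * y))" and "m = 0" and y0: "y \<noteq> 0"
    using m ok unfolding omega_of_zeta_def zeta_ok_def by auto
  have "((\<lambda>y. - 1 / (2 * y)) has_field_derivative 1 / (2 * y^2)) (at y)"
    using y0 by (auto intro!: derivative_eq_intros simp: power2_eq_square field_simps)
  moreover have "1 / (2 * y^2) = 2 * (m + (- 1 / (2 * y))^2)"
    using \<open>m = 0\<close> y0 by (simp add: power2_eq_square field_simps)
  ultimately show ?thesis unfolding om by simp
qed

lemma omega_of_zeta_identities:
  fixes Q th v1 v2 :: real and m :: complex
  assumes Q: "Q \<ge> 0" and m: "4 * m = of_real Q * exp (- 2 * \<i> * of_real th)"
    and ok: "zeta_ok Q th ((of_real v1 + \<i> * of_real v2) / 2)"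
  defines "w \<equiv> omega_of_zeta Q th ((of_real v1 + \<i> * of_real v2) / 2)"
  defines "M \<equiv> m + w^2"
  shows "of_real (2 * cmod M * fminus Q th v1 v2) = (1::complex)"
    and "of_real (2 * cmod M * fplus Q th v1 v2) = w * cnj w"
    and "of_real (2 * cmod M * f2 Q th v1 v2) = w + cnj w"
    and "of_real (2 * cmod M * f3 Q th v1 v2) = \<i> * (w - cnj w)"
proof -
  have "of_real (2 * cmod M * fminus Q th v1 v2) = (1::complex) \<and>
    of_real (2 * cmod M * fplus Q th v1 v2) = w * cnj w \<and>
    of_real (2 * cmod M * f2 Q th v1 v2) = w + cnj w \<and>
    of_real (2 * cmod M * f3 Q th v1 v2) = \<i> * (w - cnj w)"
  proof (cases "Q > 0")
    case True
    define s where "s = sqrt Q"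
    define K where "K = \<i> * of_real s * exp (- \<i> * of_real th) / 2"
    define E where "E = exp (4 * K * ((of_real v1 + \<i> * of_real v2) / 2))"
    note coth = omega_of_zeta_coth[OF True, of th, folded s_def, folded K_def]
    have s0: "s > 0" using True unfolding s_def by simp
    have "4 * K * ((of_real v1 + \<i> * of_real v2) / 2)
        = - of_real (s * h2 th v1 v2) + \<i> * of_real (s * h1 th v1 v2)"
      unfolding K_def h1_def h2_def by (simp add: complex_eq_iff Re_exp Im_exp field_simps)
    then have E: "E = exp (- of_real (s * h2 th v1 v2) + \<i> * of_real (s * h1 th v1 v2))"
      unfolding E_def by simp
    have wE: "w = K * (1 + E) / (1 - E)" and E1: "E \<noteq> 1"
      using coth(1,2) ok unfolding w_def E_def by simp_all
    have MK: "M = w^2 - K^2" using m coth(3) unfolding M_def by simp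
    have f: "fminus Q th v1 v2 = (cosh (s * h2 th v1 v2) - cos (s * h1 th v1 v2)) / s^2"
      "fplus Q th v1 v2 = (cosh (s * h2 th v1 v2) + cos (s * h1 th v1 v2)) / 4"
      "f2 Q th v1 v2 = (sin th * sinh (s * h2 th v1 v2) - cos th * sin (s * h1 th v1 v2)) / s"
      "f3 Q th v1 v2 = - (cos th * sinh (s * h2 th v1 v2) + sin th * sin (s * h1 th v1 v2)) / s"
      using True unfolding fminus_def fplus_def f2_def f3_def s_def by simp_all
    show ?thesis
      unfolding f using coth_coordinate_identities[OF s0, of "s * h2 th v1 v2" "s * h1 th v1 v2" th,
          folded K_def E, folded wE, folded MK, OF E1]
      by blast
  next
    case False
    then have "Q = 0" using Q by simp
    then have "w = - 1 / (2 * ((of_real v1 + \<i> * of_real v2) / 2))" and "M = w^2"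
      and "(of_real v1 + \<i> * of_real v2) / 2 \<noteq> (0::complex)"
      using m ok unfolding w_def M_def omega_of_zeta_def zeta_ok_def by simp_all
    with inversion_coordinate_identities[of v1 v2] show ?thesis
      using \<open>Q = 0\<close> unfolding fminus_def fplus_def f2_def f3_def by simp
  qed
  then show "of_real (2 * cmod M * fminus Q th v1 v2) = (1::complex)"
    and "of_real (2 * cmod M * fplus Q th v1 v2) = w * cnj w"
    and "of_real (2 * cmod M * f2 Q th v1 v2) = w + cnj w"
    and "of_real (2 * cmod M * f3 Q th v1 v2) = \<i> * (w - cnj w)" by auto
qed

lemma Omega_divide:
  fixes N p :: complex
  assumes p: "p \<noteq> 0"
  shows "Omega u0 u1 u2 u3 (N / p) * (p * cnj p) =
    of_real u0 * (p * cnj p + N * cnj N) + of_real u1 * (p * cnj p - N * cnj N)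
    + of_real u2 * (N * cnj p + cnj N * p) + of_real u3 * \<i> * (N * cnj p - cnj N * p)"
proof -
  have "cnj p \<noteq> 0" using p by simp
  then show ?thesis unfolding Omega_def using p by (simp add: field_simps)
qed

lemma Omega_mob_inverse:
  fixes alp bet gam del w :: complex and u0 u1 u2 u3 :: real
  assumes p: "alp - gam * w \<noteq> 0"
  defines "u' \<equiv> \<lambda>i. \<Sum>j<4. Lam alp bet gam del i j * of_real ([u0, u1, u2, u3] ! j)"
  shows "Omega u0 u1 u2 u3 (mob del (- bet) (- gam) alp w) * ((alp - gam * w) * cnj (alp - gam * w))
    = u' 0 * (1 + w * cnj w) + u' 1 * (1 - w * cnj w) + u' 2 * (w + cnj w) + u' 3 * \<i> * (w - cnj w)"
proof -
  have m: "mob del (- bet) (- gam) alp w = (del * w - bet) / (alp - gam * w)"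
    unfolding mob_def by (simp add: algebra_simps)
  have sum4: "(\<Sum>j<4. f j) = f 0 + f 1 + f 2 + f 3" for f :: "nat \<Rightarrow> complex"
    by (simp add: eval_nat_numeral)
  show ?thesis unfolding m Omega_divide[OF p] u'_def sum4
    by (simp add: Lam_def Nmat_def Let_def field_simps)
qed

locale normalised_gckv =
  fixes mu0 mu1 mu2 gam del alp bet mu0' :: complex
  assumes norm: "del^2 * mu2 / 2 - gam * del * mu1 + gam^2 * mu0 = 1"
    and alp_eq: "alp = (del * mu2 - gam * mu1) / 2"
    and bet_eq: "bet = del * mu1 / 2 - gam * mu0"
    and mu0'_eq: "mu0' = (2 * mu0 * mu2 - mu1^2) / 4"
begin

lemma det_eq_1: "alp * del - bet * gam = 1"
proof -
  have "alp * del - bet * gam = del^2 * mu2 / 2 - gam * del * mu1 + gam^2 * mu0"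
    unfolding alp_eq bet_eq by (simp add: field_simps power2_eq_square)
  then show ?thesis using norm by simp
qed

lemma gckv_sum_of_squares: "gckv mu0 mu1 mu2 z = mu0' * (gam * z + del)^2 + (alp * z + bet)^2"
proof -
  have "(del^2 * mu2 / 2 - gam * del * mu1 + gam^2 * mu0) * gckv mu0 mu1 mu2 z
      = mu0' * (gam * z + del)^2 + (alp * z + bet)^2"
    unfolding gckv_def alp_eq bet_eq mu0'_eq by (simp add: field_simps power2_eq_square)
  then show ?thesis using norm by simp
qed

lemma gckv_canonical_in_mob:
  "canonical_in (gckv mu0 mu1 mu2) (mob alp bet gam del) {z. gam * z + del \<noteq> 0} mu0'"
  unfolding canonical_in_def reads_as_def
proof
  fix z assume "z \<in> {z. gam * z + del \<noteq> 0}"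
  then have q: "gam * z + del \<noteq> 0" by simp
  have "(mob alp bet gam del has_field_derivative 1 / (gam * z + del)^2) (at z)"
    using mob_has_field_derivative[OF q, of alp bet] det_eq_1 by simp
  moreover have "gckv mu0 mu1 mu2 z * (1 / (gam * z + del)^2) = mu0' + (mob alp bet gam del z)^2"
    using q unfolding gckv_sum_of_squares mob_def by (simp add: field_simps)
  ultimately show "\<exists>d. (mob alp bet gam del has_field_derivative d) (at z) \<and>
      gckv mu0 mu1 mu2 z * d = mu0' + (mob alp bet gam del z)^2" by blast
qed

lemma gckv_mob_inverse:
  assumes p: "alp - gam * w \<noteq> 0"
  shows "gckv mu0 mu1 mu2 (mob del (- bet) (- gam) alp w) = (mu0' + w^2) / (alp - gam * w)^2"
  unfolding gckv_sum_of_squares mob_inverse_denominator[OF p] mob_inverse_numerator[OF p] det_eq_1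
  using p by (simp add: power_divide add_divide_distrib)

lemma mob_inverse_path_has_vector_derivative:
  fixes f :: "real \<Rightarrow> complex" and \<phi> :: "complex \<Rightarrow> complex"
  assumes f: "(f has_vector_derivative f') (at x)"
    and \<phi>: "(\<phi> has_field_derivative 2 * (mu0' + (\<phi> (f x))^2)) (at (f x))"
    and p: "alp - gam * \<phi> (f x) \<noteq> 0"
  shows "((\<lambda>t. mob del (- bet) (- gam) alp (\<phi> (f t))) has_vector_derivative
      2 * f' * gckv mu0 mu1 mu2 (mob del (- bet) (- gam) alp (\<phi> (f x)))) (at x)"
proof -
  have "- gam * (\<phi> \<circ> f) x + alp \<noteq> 0" using p by (simp add: algebra_simps)
  from field_vector_diff_chain_at[OF field_vector_diff_chain_at[OF f \<phi>]
      mob_has_field_derivative[OF this, of del "- bet"]]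
  have "((\<lambda>t. mob del (- bet) (- gam) alp (\<phi> (f t))) has_vector_derivative
      f' * (2 * (mu0' + (\<phi> (f x))^2)) * (1 / (alp - gam * \<phi> (f x))^2)) (at x)"
    using det_eq_1 by (simp add: o_def algebra_simps)
  then show ?thesis unfolding gckv_mob_inverse[OF p] by (simp add: field_simps)
qed

lemma adapted_coordinates_flow:
  fixes Q th v1 v2 :: real
  assumes Q: "Q \<ge> 0" and m: "4 * mu0' = of_real Q * exp (- 2 * \<i> * of_real th)"
    and ok: "zeta_ok Q th ((of_real v1 + \<i> * of_real v2) / 2)"
    and p: "alp - gam * omega_of_zeta Q th ((of_real v1 + \<i> * of_real v2) / 2) \<noteq> 0"
  defines "z \<equiv> mob del (- bet) (- gam) alp (omega_of_zeta Q th ((of_real v1 + \<i> * of_real v2) / 2))"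
  shows "((\<lambda>t. mob del (- bet) (- gam) alp (omega_of_zeta Q th ((of_real t + \<i> * of_real v2) / 2)))
           has_vector_derivative gckv mu0 mu1 mu2 z) (at v1)"
    and "((\<lambda>t. mob del (- bet) (- gam) alp (omega_of_zeta Q th ((of_real v1 + \<i> * of_real t) / 2)))
           has_vector_derivative gckv (\<i> * mu0) (\<i> * mu1) (\<i> * mu2) z) (at v2)"
proof -
  note \<omega> = omega_of_zeta_has_field_derivative[OF Q m ok]
  have "((\<lambda>t. (of_real t + \<i> * of_real v2) / 2) has_vector_derivative 1 / 2) (at v1)"
    by (auto intro!: derivative_eq_intros)
  from mob_inverse_path_has_vector_derivative[OF this, OF \<omega> p]
  show "((\<lambda>t. mob del (- bet) (- gam) alp (omega_of_zeta Q th ((of_real t + \<i> * of_real v2) / 2)))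
           has_vector_derivative gckv mu0 mu1 mu2 z) (at v1)"
    unfolding z_def by simp
  have "((\<lambda>t. (of_real v1 + \<i> * of_real t) / 2) has_vector_derivative \<i> / 2) (at v2)"
    by (auto intro!: derivative_eq_intros)
  from mob_inverse_path_has_vector_derivative[OF this, OF \<omega> p]
  show "((\<lambda>t. mob del (- bet) (- gam) alp (omega_of_zeta Q th ((of_real v1 + \<i> * of_real t) / 2)))
           has_vector_derivative gckv (\<i> * mu0) (\<i> * mu1) (\<i> * mu2) z) (at v2)"
    unfolding z_def gckv_def by (simp add: algebra_simps)
qed

lemma Omega_adapted_coordinates:
  fixes Q th v1 v2 u0 u1 u2 u3 :: real
  assumes Q: "Q \<ge> 0" and m: "4 * mu0' = of_real Q * exp (- 2 * \<i> * of_real th)"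
    and ok: "zeta_ok Q th ((of_real v1 + \<i> * of_real v2) / 2)"
    and p: "alp - gam * omega_of_zeta Q th ((of_real v1 + \<i> * of_real v2) / 2) \<noteq> 0"
  defines "z \<equiv> mob del (- bet) (- gam) alp (omega_of_zeta Q th ((of_real v1 + \<i> * of_real v2) / 2))"
  defines "u' \<equiv> \<lambda>i. \<Sum>j<4. Lam alp bet gam del i j * of_real ([u0, u1, u2, u3] ! j)"
  defines "D \<equiv> (u' 0 - u' 1) * of_real (fplus Q th v1 v2) + (u' 0 + u' 1) * of_real (fminus Q th v1 v2)
                + u' 2 * of_real (f2 Q th v1 v2) + u' 3 * of_real (f3 Q th v1 v2)"
  shows "Omega u0 u1 u2 u3 z = of_real (2 * cmod (gckv mu0 mu1 mu2 z)) * D"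
proof -
  define w where "w = omega_of_zeta Q th ((of_real v1 + \<i> * of_real v2) / 2)"
  define pp where "pp = alp - gam * w"
  define M where "M = mu0' + w^2"
  have pp0: "pp \<noteq> 0" using p unfolding pp_def w_def .
  note ids = omega_of_zeta_identities[OF Q m ok, folded w_def M_def]
  have "Omega u0 u1 u2 u3 z * (pp * cnj pp)
      = u' 0 * (of_real (2 * cmod M * fminus Q th v1 v2) + of_real (2 * cmod M * fplus Q th v1 v2))
      + u' 1 * (of_real (2 * cmod M * fminus Q th v1 v2) - of_real (2 * cmod M * fplus Q th v1 v2))
      + u' 2 * of_real (2 * cmod M * f2 Q th v1 v2) + u' 3 * of_real (2 * cmod M * f3 Q th v1 v2)"
    unfolding ids z_def w_def[symmetric] pp_def u'_def Omega_mob_inverse[OF p[folded w_def]]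
    by (simp add: mult.assoc)
  also have "\<dots> = of_real (2 * cmod M) * D" unfolding D_def by (simp add: algebra_simps)
  finally have "Omega u0 u1 u2 u3 z * of_real ((cmod pp)^2) = of_real (2 * cmod M) * D"
    by (simp only: complex_norm_square)
  moreover have "cmod M = (cmod pp)^2 * cmod (gckv mu0 mu1 mu2 z)"
    unfolding z_def w_def[symmetric] gckv_mob_inverse[OF p[folded w_def]] M_def pp_def
    using pp0[unfolded pp_def] by (simp add: norm_divide norm_power)
  ultimately have "Omega u0 u1 u2 u3 z * of_real ((cmod pp)^2)
      = of_real (2 * cmod (gckv mu0 mu1 mu2 z)) * D * of_real ((cmod pp)^2)"
    by (simp add: algebra_simps)
  then show ?thesis using pp0 by simp
qed

lemma metric_in_adapted_coordinates:
  fixes Q th v1 v2 u0 u1 u2 u3 :: real and d1 d2 :: complex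
  assumes Q: "Q \<ge> 0" and m: "4 * mu0' = of_real Q * exp (- 2 * \<i> * of_real th)"
    and ok: "zeta_ok Q th ((of_real v1 + \<i> * of_real v2) / 2)"
    and p: "alp - gam * omega_of_zeta Q th ((of_real v1 + \<i> * of_real v2) / 2) \<noteq> 0"
  defines "z \<equiv> mob del (- bet) (- gam) alp (omega_of_zeta Q th ((of_real v1 + \<i> * of_real v2) / 2))"
  defines "u' \<equiv> \<lambda>i. \<Sum>j<4. Lam alp bet gam del i j * of_real ([u0, u1, u2, u3] ! j)"
  defines "D \<equiv> (u' 0 - u' 1) * of_real (fplus Q th v1 v2) + (u' 0 + u' 1) * of_real (fminus Q th v1 v2)
                + u' 2 * of_real (f2 Q th v1 v2) + u' 3 * of_real (f3 Q th v1 v2)"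
  assumes Om0: "Omega u0 u1 u2 u3 z \<noteq> 0"
    and d1: "((\<lambda>t. xy_of_z (mob del (- bet) (- gam) alp (omega_of_zeta Q th ((of_real t + \<i> * of_real v2) / 2))))
          has_vector_derivative d1) (at v1)"
    and d2: "((\<lambda>t. xy_of_z (mob del (- bet) (- gam) alp (omega_of_zeta Q th ((of_real v1 + \<i> * of_real t) / 2))))
          has_vector_derivative d2) (at v2)"
  shows "of_real (d1 \<bullet> d1) / (Omega u0 u1 u2 u3 z)^2 = 1 / D^2"
    and "of_real (d2 \<bullet> d2) / (Omega u0 u1 u2 u3 z)^2 = 1 / D^2"
    and "of_real (d1 \<bullet> d2) / (Omega u0 u1 u2 u3 z)^2 = 0"
proof -
  define V where "V = gckv mu0 mu1 mu2 z"
  note flow = adapted_coordinates_flow[OF Q m ok p, folded z_def]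
  have "gckv (\<i> * mu0) (\<i> * mu1) (\<i> * mu2) z = \<i> * V"
    unfolding V_def gckv_def by (simp add: algebra_simps)
  note flow = flow(1)[folded V_def] flow(2)[unfolded this]
  have "d1 = 2 * cnj V"
    using d1 flow(1)[THEN has_vector_derivative_cnj, THEN has_vector_derivative_mult_right, of 2]
    unfolding xy_of_z_def by (rule vector_derivative_unique_at)
  moreover have "d2 = 2 * cnj (\<i> * V)"
    using d2 flow(2)[THEN has_vector_derivative_cnj, THEN has_vector_derivative_mult_right, of 2]
    unfolding xy_of_z_def by (rule vector_derivative_unique_at)
  ultimately have "d1 \<bullet> d1 = 4 * (cmod V)^2" "d2 \<bullet> d2 = 4 * (cmod V)^2" "d1 \<bullet> d2 = 0"
    by (simp_all add: power2_norm_eq_inner[symmetric] norm_mult power_mult_distrib inner_complex_def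
        algebra_simps)
  moreover have "Omega u0 u1 u2 u3 z = of_real (2 * cmod V) * D"
    unfolding V_def z_def D_def u'_def by (rule Omega_adapted_coordinates[OF Q m ok p])
  ultimately show "of_real (d1 \<bullet> d1) / (Omega u0 u1 u2 u3 z)^2 = 1 / D^2"
    and "of_real (d2 \<bullet> d2) / (Omega u0 u1 u2 u3 z)^2 = 1 / D^2"
    and "of_real (d1 \<bullet> d2) / (Omega u0 u1 u2 u3 z)^2 = 0"
    using Om0 by (simp_all add: power_mult_distrib field_simps)
qed

end

theorem theorem8p1:
  fixes mu0 mu1 mu2 gam del :: complex
  assumes norm: "del^2 * mu2 / 2 - gam * del * mu1 + gam^2 * mu0 = 1"
  defines "alp \<equiv> (del * mu2 - gam * mu1) / 2"
      and "bet \<equiv> del * mu1 / 2 - gam * mu0"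
      and "mu0' \<equiv> (2 * mu0 * mu2 - mu1^2) / 4"
  shows
        "(alp * del - bet * gam \<noteq> 0 \<and>
     canonical_in (gckv mu0 mu1 mu2) (mob alp bet gam del) {z. gam * z + del \<noteq> 0} mu0') \<and>
        (\<forall>a b c d c'. a * d - b * c \<noteq> 0 \<longrightarrow>
       canonical_in (\<lambda>w. mu0' + w^2) (mob a b c d) {w. c * w + d \<noteq> 0} c' \<longrightarrow>
       (\<exists>gam' del'. del'^2 + mu0' * gam'^2 = 1 \<and>
         (\<forall>w. c * w + d \<noteq> 0 \<longrightarrow> gam' * w + del' \<noteq> 0 \<and>
              mob a b c d w = mob del' (- gam' * mu0') gam' del' w))) \<and>
        (\<forall>Q th v1 v2. Q \<ge> 0 \<longrightarrow> 4 * mu0' = of_real Q * exp (- 2 * \<i> * of_real th) \<longrightarrow>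
       (Q = 0 \<or> (0 \<le> th \<and> th < pi)) \<longrightarrow>
       zeta_ok Q th ((of_real v1 + \<i> * of_real v2) / 2) \<longrightarrow>
       alp - gam * omega_of_zeta Q th ((of_real v1 + \<i> * of_real v2) / 2) \<noteq> 0 \<longrightarrow>
       ((\<lambda>t. mob del (- bet) (- gam) alp (omega_of_zeta Q th ((of_real t + \<i> * of_real v2) / 2)))
          has_vector_derivative
          gckv mu0 mu1 mu2 (mob del (- bet) (- gam) alp (omega_of_zeta Q th ((of_real v1 + \<i> * of_real v2) / 2))))
         (at v1) \<and>
       ((\<lambda>t. mob del (- bet) (- gam) alp (omega_of_zeta Q th ((of_real v1 + \<i> * of_real t) / 2)))
          has_vector_derivative
          gckv (\<i> * mu0) (\<i> * mu1) (\<i> * mu2) (mob del (- bet) (- gam) alp (omega_of_zeta Q th ((of_real v1 + \<i> * of_real v2) / 2))))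
         (at v2)) \<and>
        (\<forall>Q th v1 v2 u0 u1 u2 u3 d1 d2. Q \<ge> 0 \<longrightarrow> 4 * mu0' = of_real Q * exp (- 2 * \<i> * of_real th) \<longrightarrow>
       (Q = 0 \<or> (0 \<le> th \<and> th < pi)) \<longrightarrow>
       (u0, u1, u2, u3) \<noteq> (0, 0, 0, 0) \<longrightarrow>
       zeta_ok Q th ((of_real v1 + \<i> * of_real v2) / 2) \<longrightarrow>
       alp - gam * omega_of_zeta Q th ((of_real v1 + \<i> * of_real v2) / 2) \<noteq> 0 \<longrightarrow>
       Omega u0 u1 u2 u3 (mob del (- bet) (- gam) alp (omega_of_zeta Q th ((of_real v1 + \<i> * of_real v2) / 2))) \<noteq> 0 \<longrightarrow>
       ((\<lambda>t. xy_of_z (mob del (- bet) (- gam) alp (omega_of_zeta Q th ((of_real t + \<i> * of_real v2) / 2))))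
          has_vector_derivative d1) (at v1) \<longrightarrow>
       ((\<lambda>t. xy_of_z (mob del (- bet) (- gam) alp (omega_of_zeta Q th ((of_real v1 + \<i> * of_real t) / 2))))
          has_vector_derivative d2) (at v2) \<longrightarrow>
       (let z = mob del (- bet) (- gam) alp (omega_of_zeta Q th ((of_real v1 + \<i> * of_real v2) / 2));
            Om = Omega u0 u1 u2 u3 z;
            u = [u0, u1, u2, u3];
            u' = (\<lambda>i. \<Sum>j<4. Lam alp bet gam del i j * of_real (u ! j));
            D = (u' 0 - u' 1) * of_real (fplus Q th v1 v2) + (u' 0 + u' 1) * of_real (fminus Q th v1 v2)
                + u' 2 * of_real (f2 Q th v1 v2) + u' 3 * of_real (f3 Q th v1 v2)
        in of_real (d1 \<bullet> d1) / Om^2 = 1 / D^2 \<and>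
           of_real (d2 \<bullet> d2) / Om^2 = 1 / D^2 \<and>
           of_real (d1 \<bullet> d2) / Om^2 = 0))"
proof -
  interpret normalised_gckv mu0 mu1 mu2 gam del alp bet mu0'
    by unfold_locales (simp_all add: norm alp_def bet_def mu0'_def)
  show ?thesis
    unfolding Let_def
  proof (intro conjI allI impI)
    show "alp * del - bet * gam \<noteq> 0" using det_eq_1 by simp
    show "canonical_in (gckv mu0 mu1 mu2) (mob alp bet gam del) {z. gam * z + del \<noteq> 0} mu0'"
      by (rule gckv_canonical_in_mob)
  qed (fact canonical_in_mob_unique | (rule adapted_coordinates_flow metric_in_adapted_coordinates; assumption))+
qed

end
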